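(* Let $G$ be a looped simple graph and let $J$ be an independent set of some transverse matroid of $G$ (i.e. $J$ is a subtransversal of $W(G)$ independent in $M[IAS(G)]$). Then there is a looped simple graph $H$ locally equivalent to $G$ and an induced isomorphism $\beta:M[IAS(G)]\to M[IAS(H)]$ such that $\beta(J)\subseteq\Phi(H)=\{\phi_H(v):v\in V(H)\}$.
   Context: A looped simple graph is a finite graph in which each vertex carries at most one loop and no two distinct vertices are joined by more than one edge. "Adjacent"/"neighbors" refer only to distinct vertices joined by a non-loop edge; $N_G(v)$ is the set of neighbors of $v$. $A(G)$ is the $V(G)\times V(G)$ matrix over $GF(2)$ with diagonal entry $1$ exactly at looped vertices and off-diagonal entry $1$ exactly for adjacent pairs. $IAS(G)=(I\mid A(G)\mid A(G)+I)$ over $GF(2)$, rows indexed by $V(G)$; the $v$-columns of the three blocks are labelled $\phi_G(v),\chi_G(v),\psi_G(v)$. $M[IAS(G)]$ is the binary column matroid of $IAS(G)$ on $W(G)=\{\phi_G(v),\chi_G(v),\psi_G(v):v\in V(G)\}$. The vertex triple of $v$ is $\tau_G(v)=\{\phi_G(v),\chi_G(v),\psi_G(v)\}$. A subtransversal (transversal) meets each vertex triple in at most (exactly) one element; a transverse matroid of $G$ is the restriction of $M[IAS(G)]$ to a transversal. Local equivalence: $G_\ell^v$ complements the loop status of $v$; $G_s^v$ complements the adjacency status of every pair of distinct neighbors of $v$; $G_{ns}^v$ does this and also complements the loop status of every neighbor of $v$. $H$ is locally equivalent to $G$ if obtained from $G$ by a finite sequence of such operations. Induced isomorphisms: for each such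 operation producing $G'$ from $G$ there is a matroid isomorphism $M[IAS(G)]\to M[IAS(G')]$ sending $\alpha_G(x)\mapsto\alpha_{G'}(x)$ for all $\alpha\in\{\phi,\chi,\psi\}$, $x\in V(G)$, except: for $G'=G_\ell^v$, $\chi_G(v)\mapsto\psi_{G'}(v)$, $\psi_G(v)\mapsto\chi_{G'}(v)$; for $G'=G_{ns}^v$ with $v$ unlooped, $\phi_G(v)\mapsto\psi_{G'}(v)$, $\psi_G(v)\mapsto\phi_{G'}(v)$, and with $v$ looped, $\phi_G(v)\mapsto\chi_{G'}(v)$, $\chi_G(v)\mapsto\phi_{G'}(v)$; for $G'=G_s^v$, the same exchange at $v$ as for $G_{ns}^v$ and in addition, for every $w\in N_G(v)$, $\chi_G(w)\mapsto\psi_{G'}(w)$, $\psi_G(w)\mapsto\chi_{G'}(w)$. An induced isomorphism $M[IAS(G)]\to M[IAS(H)]$ is a composition of such isomorphisms along a sequence of operations transforming $G$ into $H$. *)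

theory Defs
  imports Main
begin

text \<open>A looped simple graph on a finite vertex set V is encoded by its adjacency
  matrix over GF(2), as a symmetric boolean function A supported on V x V:
  A v v = True iff v is looped; for v \<noteq> w, A v w = True iff v, w adjacent.\<close>

definition looped_simple :: "'a set \<Rightarrow> ('a \<Rightarrow> 'a \<Rightarrow> bool) \<Rightarrow> bool" where
  "looped_simple V A \<longleftrightarrow> finite V \<and> (\<forall>x y. A x y = A y x)
     \<and> (\<forall>x y. A x y \<longrightarrow> x \<in> V \<and> y \<in> V)"

definition nbrs :: "'a set \<Rightarrow> ('a \<Rightarrow> 'a \<Rightarrow> bool) \<Rightarrow> 'a \<Rightarrow> 'a set" where
  "nbrs V A v = {w \<in> V. w \<noteq> v \<and> A v w}"

datatype kind = Phi | Chi | Psi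

text \<open>Elements of W(G): (Phi,v) = phi_G(v), (Chi,v) = chi_G(v), (Psi,v) = psi_G(v).\<close>

definition W :: "'a set \<Rightarrow> (kind \<times> 'a) set" where
  "W V = UNIV \<times> V"

text \<open>Column of IAS(G) labelled by an element, as a vector over GF(2) indexed by V.\<close>
fun col :: "('a \<Rightarrow> 'a \<Rightarrow> bool) \<Rightarrow> kind \<times> 'a \<Rightarrow> 'a \<Rightarrow> bool" where
  "col A (Phi, v) x = (x = v)"
| "col A (Chi, v) x = A x v"
| "col A (Psi, v) x = (A x v \<noteq> (x = v))"

text \<open>Independence in the binary column matroid M[IAS(G)]: no nonempty subset of
  the columns sums to zero over GF(2).\<close>
definition indep_IAS :: "'a set \<Rightarrow> ('a \<Rightarrow> 'a \<Rightarrow> bool) \<Rightarrow> (kind \<times> 'a) set \<Rightarrow> bool" where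
  "indep_IAS V A S \<longleftrightarrow> S \<subseteq> W V \<and>
     (\<forall>T \<subseteq> S. T \<noteq> {} \<longrightarrow> (\<exists>x \<in> V. odd (card {e \<in> T. col A e x})))"

definition subtransversal :: "'a set \<Rightarrow> (kind \<times> 'a) set \<Rightarrow> bool" where
  "subtransversal V S \<longleftrightarrow> S \<subseteq> W V \<and> (\<forall>v \<in> V. card {e \<in> S. snd e = v} \<le> 1)"

definition Phis :: "'a set \<Rightarrow> (kind \<times> 'a) set" where
  "Phis V = {(Phi, v) | v. v \<in> V}"

definition loop_op :: "'a \<Rightarrow> ('a \<Rightarrow> 'a \<Rightarrow> bool) \<Rightarrow> ('a \<Rightarrow> 'a \<Rightarrow> bool)" where
  "loop_op v A = (\<lambda>x y. if x = v \<and> y = v then \<not> A x y else A x y)"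

definition s_op :: "'a set \<Rightarrow> 'a \<Rightarrow> ('a \<Rightarrow> 'a \<Rightarrow> bool) \<Rightarrow> ('a \<Rightarrow> 'a \<Rightarrow> bool)" where
  "s_op V v A = (\<lambda>x y. if x \<noteq> y \<and> x \<in> nbrs V A v \<and> y \<in> nbrs V A v then \<not> A x y else A x y)"

definition ns_op :: "'a set \<Rightarrow> 'a \<Rightarrow> ('a \<Rightarrow> 'a \<Rightarrow> bool) \<Rightarrow> ('a \<Rightarrow> 'a \<Rightarrow> bool)" where
  "ns_op V v A = (\<lambda>x y. if x \<in> nbrs V A v \<and> y \<in> nbrs V A v then \<not> A x y else A x y)"

definition swapk :: "kind \<Rightarrow> kind \<Rightarrow> kind \<Rightarrow> kind" where
  "swapk a b k = (if k = a then b else if k = b then a else k)"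

text \<open>Element maps of the isomorphisms induced by the operations (computed in the
  graph before the operation).\<close>
definition loop_map :: "'a \<Rightarrow> kind \<times> 'a \<Rightarrow> kind \<times> 'a" where
  "loop_map v e = (if snd e = v then (swapk Chi Psi (fst e), snd e) else e)"

definition ns_map :: "('a \<Rightarrow> 'a \<Rightarrow> bool) \<Rightarrow> 'a \<Rightarrow> kind \<times> 'a \<Rightarrow> kind \<times> 'a" where
  "ns_map A v e = (if snd e = v then
       (if A v v then (swapk Phi Chi (fst e), snd e) else (swapk Phi Psi (fst e), snd e))
     else e)"

definition s_map :: "'a set \<Rightarrow> ('a \<Rightarrow> 'a \<Rightarrow> bool) \<Rightarrow> 'a \<Rightarrow> kind \<times> 'a \<Rightarrow> kind \<times> 'a" where
  "s_map V A v e = (if snd e = v then ns_map A v e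
     else if snd e \<in> nbrs V A v then (swapk Chi Psi (fst e), snd e) else e)"

inductive induced_iso :: "'a set \<Rightarrow> ('a \<Rightarrow> 'a \<Rightarrow> bool) \<Rightarrow> ('a \<Rightarrow> 'a \<Rightarrow> bool)
    \<Rightarrow> (kind \<times> 'a \<Rightarrow> kind \<times> 'a) \<Rightarrow> bool" for V A where
  refl: "induced_iso V A A id"
| loop: "induced_iso V A B \<beta> \<Longrightarrow> v \<in> V \<Longrightarrow> induced_iso V A (loop_op v B) (loop_map v \<circ> \<beta>)"
| s: "induced_iso V A B \<beta> \<Longrightarrow> v \<in> V \<Longrightarrow> induced_iso V A (s_op V v B) (s_map V B v \<circ> \<beta>)"
| ns: "induced_iso V A B \<beta> \<Longrightarrow> v \<in> V \<Longrightarrow> induced_iso V A (ns_op V v B) (ns_map B v \<circ> \<beta>)"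

end

theory Submission
  imports Defs
begin

text \<open>On \<open>IAS(G)\<close> it acts as the row operation adding
  row \<open>v\<close> to the rows of the neighbours of \<open>v\<close>, so it preserves independence. Measure a
  subtransversal by its number of non-\<open>\<phi>\<close> elements and let \<open>x\<close> be one of them, at vertex \<open>v\<close>.
  If column \<open>x\<close> has entry 1 in row \<open>v\<close>, the isomorphism induced by \<open>G\<^sub>n\<^sub>s\<^sup>v\<close> sends \<open>x\<close> to \<open>\<phi>(v)\<close>
  and fixes the rest of the subtransversal. Otherwise column \<open>x\<close> is the sum of the
  \<open>\<phi>\<close>-columns of the neighbours of \<open>v\<close>, so by independence some neighbour \<open>w\<close> has
  \<open>\<phi>(w)\<close> outside the set; \<open>G\<^sub>n\<^sub>s\<^sup>w\<close> then toggles the loop at \<open>v\<close> without creating a new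
  non-\<open>\<phi>\<close> element, and we are in the first case.\<close>

lemma finite_subset_W:
  assumes "finite V" "S \<subseteq> W V"
  shows "finite S"
proof -
  have "(UNIV :: kind set) = {Phi, Chi, Psi}"
    using kind.exhaust by auto
  then have "finite (UNIV :: kind set)"
    by (metis finite.emptyI finite.insertI)
  then have "finite (W V)"
    unfolding W_def using assms(1) by (rule finite_cartesian_product)
  then show ?thesis
    using assms(2) by (rule finite_subset[rotated])
qed

lemma odd_card_filter_xor:
  assumes "finite T"
  shows "odd (card {e\<in>T. p e \<noteq> q e}) \<longleftrightarrow> (odd (card {e\<in>T. p e}) \<noteq> odd (card {e\<in>T. q e}))"
  using assms
proof (induction T rule: finite_induct)
  case empty
  then show ?case by simp
next
  case (insert a T)
  have "card {e\<in>insert a T. P e} = (if P a then Suc (card {e\<in>T. P e}) else card {e\<in>T. P e})" for P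
  proof -
    have "{e\<in>insert a T. P e} = (if P a then insert a {e\<in>T. P e} else {e\<in>T. P e})"
      by auto
    then show ?thesis
      using insert.hyps by simp
  qed
  then show ?case
    using insert.IH by auto
qed

lemma card_filter_inj_image:
  assumes "inj f"
  shows "card {e\<in>f ` T. P e} = card {e\<in>T. P (f e)}"
proof -
  have "{e\<in>f ` T. P e} = f ` {e\<in>T. P (f e)}"
    by auto
  then show ?thesis
    using card_image[OF inj_on_subset[OF assms]] by simp
qed

lemma looped_simple_ns_op: "looped_simple V B \<Longrightarrow> looped_simple V (ns_op V v B)"
  unfolding looped_simple_def ns_op_def nbrs_def by auto

lemma ns_map_ns_map [simp]: "ns_map B v (ns_map B v e) = e"
  by (cases e) (auto simp: ns_map_def swapk_def)

lemma inj_ns_map: "inj (ns_map B v)"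
  by (metis injI ns_map_ns_map)

lemma snd_ns_map [simp]: "snd (ns_map B v e) = snd e"
  by (simp add: ns_map_def)

lemma ns_map_other: "snd e \<noteq> v \<Longrightarrow> ns_map B v e = e"
  by (simp add: ns_map_def)

lemma ns_map_W: "S \<subseteq> W V \<Longrightarrow> ns_map B v ` S \<subseteq> W V"
  by (auto simp: W_def ns_map_def)

lemma col_ns_op_ns_map:
  assumes "looped_simple V B"
  shows "col (ns_op V v B) (ns_map B v e) x \<longleftrightarrow> (col B e x \<noteq> (x \<in> nbrs V B v \<and> col B e v))"
proof -
  obtain k y where e: "e = (k, y)"
    by (cases e)
  have sym: "B x y = B y x" for x y
    using assms by (simp add: looped_simple_def)
  have supp: "B x y \<Longrightarrow> x \<in> V" "B x y \<Longrightarrow> y \<in> V" for x y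
    using assms unfolding looped_simple_def by blast+
  show ?thesis
    unfolding e
    by (cases k; cases "y = v"; cases "B v v")
       (auto simp: ns_map_def swapk_def ns_op_def nbrs_def dest: supp intro: sym[THEN iffD1])
qed

lemma indep_IAS_ns_op:
  assumes ls: "looped_simple V B" and v: "v \<in> V" and ind: "indep_IAS V B S"
  shows "indep_IAS V (ns_op V v B) (ns_map B v ` S)"
  unfolding indep_IAS_def
proof (intro conjI allI impI)
  let ?m = "ns_map B v" and ?N = "nbrs V B v"
  have SW: "S \<subseteq> W V"
    using ind by (simp add: indep_IAS_def)
  then show "?m ` S \<subseteq> W V"
    by (rule ns_map_W)
  fix T' assume T': "T' \<subseteq> ?m ` S" "T' \<noteq> {}"
  define T where "T = ?m ` T'"
  have T'_eq: "T' = ?m ` T"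
    unfolding T_def by (simp add: image_comp)
  have "T \<subseteq> S" "T \<noteq> {}"
    using T' unfolding T_def by (auto simp: image_comp)
  then obtain x where x: "x \<in> V" "odd (card {e\<in>T. col B e x})"
    using ind unfolding indep_IAS_def by blast
  have "finite V"
    using ls by (simp add: looped_simple_def)
  then have finT: "finite T"
    using \<open>T \<subseteq> S\<close> SW by (blast intro: finite_subset_W)
  have parity: "odd (card {e\<in>T'. col (ns_op V v B) e y}) \<longleftrightarrow>
      (odd (card {e\<in>T. col B e y}) \<noteq> (y \<in> ?N \<and> odd (card {e\<in>T. col B e v})))" for y
  proof -
    have "card {e\<in>T'. col (ns_op V v B) e y} = card {e\<in>T. col B e y \<noteq> (y \<in> ?N \<and> col B e v)}"
      unfolding T'_eq card_filter_inj_image[OF inj_ns_map] col_ns_op_ns_map[OF ls] ..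
    then show ?thesis
      using odd_card_filter_xor[OF finT] by (cases "y \<in> ?N") simp_all
  qed
  \<comment> \<open>Row \<open>v\<close> is not modified; if its parity is even, no row parity changes at all.\<close>
  show "\<exists>y\<in>V. odd (card {e\<in>T'. col (ns_op V v B) e y})"
  proof (cases "odd (card {e\<in>T. col B e v})")
    case True
    then show ?thesis
      using parity[of v] v by (auto simp: nbrs_def)
  next
    case False
    then show ?thesis
      using parity[of x] x by auto
  qed
qed

lemma subtransversal_ns_map:
  assumes "subtransversal V S"
  shows "subtransversal V (ns_map B v ` S)"
proof -
  have "S \<subseteq> W V"
    using assms by (simp add: subtransversal_def)
  then have "ns_map B v ` S \<subseteq> W V"
    by (rule ns_map_W)
  moreover have "card {e\<in>ns_map B v ` S. snd e = u} = card {e\<in>S. snd e = u}" for u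
    unfolding card_filter_inj_image[OF inj_ns_map] by simp
  ultimately show ?thesis
    using assms by (simp add: subtransversal_def)
qed

lemma subtransversal_eq:
  assumes "subtransversal V S" "finite V" "e \<in> S" "x \<in> S" "snd e = snd x"
  shows "e = x"
proof -
  have SW: "S \<subseteq> W V"
    using assms(1) by (simp add: subtransversal_def)
  then have "snd x \<in> V" "finite S"
    using assms(2,4) finite_subset_W by (auto simp: W_def)
  then have "card {e\<in>S. snd e = snd x} \<le> Suc 0" "finite {e\<in>S. snd e = snd x}"
    using assms(1) by (simp_all add: subtransversal_def)
  then show ?thesis
    using assms(3-5) card_le_Suc0_iff_eq by blast
qed

definition indep_image ::
    "'a set \<Rightarrow> ('a \<Rightarrow> 'a \<Rightarrow> bool) \<Rightarrow> (kind \<times> 'a) set \<Rightarrow> ('a \<Rightarrow> 'a \<Rightarrow> bool)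
      \<Rightarrow> (kind \<times> 'a \<Rightarrow> kind \<times> 'a) \<Rightarrow> bool" where
  "indep_image V A J B \<beta> \<longleftrightarrow> induced_iso V A B \<beta> \<and> looped_simple V B
     \<and> subtransversal V (\<beta> ` J) \<and> indep_IAS V B (\<beta> ` J)"

lemma indep_image_ns:
  assumes "indep_image V A J B \<beta>" "v \<in> V"
  shows "indep_image V A J (ns_op V v B) (ns_map B v \<circ> \<beta>)"
proof -
  have ii: "induced_iso V A B \<beta>" and ls: "looped_simple V B"
    and st: "subtransversal V (\<beta> ` J)" and ind: "indep_IAS V B (\<beta> ` J)"
    using assms(1) by (simp_all add: indep_image_def)
  show ?thesis
    unfolding indep_image_def image_comp[symmetric]
    using induced_iso.ns[OF ii assms(2)] looped_simple_ns_op[OF ls] subtransversal_ns_map[OF st]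
      indep_IAS_ns_op[OF ls assms(2) ind]
    by blast
qed

definition card_non_Phi :: "(kind \<times> 'a) set \<Rightarrow> nat" where
  "card_non_Phi S = card {e\<in>S. fst e \<noteq> Phi}"

lemma ns_map_pivot_image:
  assumes "subtransversal V S" "finite V" "x \<in> S" "fst x \<noteq> Phi" "col B x (snd x)"
  shows "ns_map B (snd x) ` S = insert (Phi, snd x) (S - {x})"
proof -
  let ?m = "ns_map B (snd x)"
  obtain k u where x: "x = (k, u)"
    by (cases x)
  have "?m x = (Phi, snd x)"
    using assms(4,5) unfolding x by (cases k) (auto simp: ns_map_def swapk_def)
  moreover have "?m ` (S - {x}) = S - {x}"
  proof -
    have "?m e = e" if "e \<in> S - {x}" for e
      using subtransversal_eq[OF assms(1,2), of e x] that assms(3) by (auto intro: ns_map_other)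
    then show ?thesis
      by simp
  qed
  moreover have "S = insert x (S - {x})"
    using assms(3) by blast
  ultimately show ?thesis
    by (metis image_insert)
qed

lemma card_non_Phi_pivot:
  assumes "subtransversal V S" "finite V" "x \<in> S" "fst x \<noteq> Phi" "col B x (snd x)"
  shows "card_non_Phi (ns_map B (snd x) ` S) < card_non_Phi S"
proof -
  have "finite S"
    using assms(1,2) finite_subset_W unfolding subtransversal_def by blast
  then have "card ({e\<in>S. fst e \<noteq> Phi} - {x}) < card {e\<in>S. fst e \<noteq> Phi}"
    using assms(3,4) by (intro card_Diff1_less) auto
  moreover have "{e\<in>ns_map B (snd x) ` S. fst e \<noteq> Phi} = {e\<in>S. fst e \<noteq> Phi} - {x}"
    unfolding ns_map_pivot_image[OF assms] by auto
  ultimately show ?thesis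
    unfolding card_non_Phi_def by simp
qed

lemma card_non_Phi_ns_map_le:
  assumes "finite S" "(Phi, w) \<notin> S"
  shows "card_non_Phi (ns_map B w ` S) \<le> card_non_Phi S"
proof -
  let ?m = "ns_map B w"
  have "{e\<in>?m ` S. fst e \<noteq> Phi} \<subseteq> ?m ` {e\<in>S. fst e \<noteq> Phi}"
  proof
    fix e' assume "e' \<in> {e\<in>?m ` S. fst e \<noteq> Phi}"
    then obtain e where e: "e \<in> S" "e' = ?m e" "fst (?m e) \<noteq> Phi"
      by auto
    have "fst e \<noteq> Phi"
    proof
      assume "fst e = Phi"
      moreover from this have "snd e \<noteq> w"
        using assms(2) e(1) by (cases e) auto
      ultimately show False
        using e(3) ns_map_other by metis
    qed
    then show "e' \<in> ?m ` {e\<in>S. fst e \<noteq> Phi}"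
      using e by blast
  qed
  then have "card {e\<in>?m ` S. fst e \<noteq> Phi} \<le> card (?m ` {e\<in>S. fst e \<noteq> Phi})"
    using assms(1) by (intro card_mono) auto
  then show ?thesis
    unfolding card_non_Phi_def
    using card_image[OF inj_on_subset[OF inj_ns_map[of B w] subset_UNIV]] by simp
qed

lemma exists_nbr_Phi_notin:
  assumes ls: "looped_simple V B" and ind: "indep_IAS V B S"
    and x: "x \<in> S" "fst x \<noteq> Phi" and c: "\<not> col B x (snd x)"
  shows "\<exists>w\<in>nbrs V B (snd x). (Phi, w) \<notin> S"
proof (rule ccontr)
  let ?N = "nbrs V B (snd x)"
  define T where "T = insert x ((\<lambda>w. (Phi, w)) ` ?N)"
  assume "\<not> ?thesis"
  then have "T \<subseteq> S"
    using x unfolding T_def by auto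
  then obtain y where y: "y \<in> V" "odd (card {e\<in>T. col B e y})"
    using ind unfolding indep_IAS_def T_def by blast
  obtain k u where xk: "x = (k, u)"
    by (cases x)
  have "col B x y \<longleftrightarrow> y \<in> ?N"
  proof (cases "y = u")
    case True
    then show ?thesis
      using c unfolding xk by (simp add: nbrs_def)
  next
    case False
    then show ?thesis
      using x(2) y(1) ls unfolding xk by (cases k) (auto simp: nbrs_def looped_simple_def)
  qed
  then have "{e\<in>T. col B e y} = (if y \<in> ?N then {x, (Phi, y)} else {})"
    unfolding T_def by auto
  moreover have "x \<noteq> (Phi, y)"
    using x(2) by auto
  ultimately show False
    using y(2) by (simp split: if_splits)
qed

lemma col_ns_op_nbr:
  assumes "v \<in> nbrs V B w" "k \<noteq> Phi"
  shows "col (ns_op V w B) (k, v) v \<longleftrightarrow> \<not> col B (k, v) v"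
  using assms by (cases k) (simp_all add: ns_op_def)

lemma indep_image_make_pivot:
  assumes inv: "indep_image V A J B \<beta>" and x: "x \<in> \<beta> ` J" "fst x \<noteq> Phi"
    and c: "\<not> col B x (snd x)"
  obtains w where "w \<in> V" "card_non_Phi (ns_map B w ` \<beta> ` J) \<le> card_non_Phi (\<beta> ` J)"
    "x \<in> ns_map B w ` \<beta> ` J" "col (ns_op V w B) x (snd x)"
proof -
  have ls: "looped_simple V B" and st: "subtransversal V (\<beta> ` J)"
    using inv by (simp_all add: indep_image_def)
  obtain w where w: "w \<in> nbrs V B (snd x)" "(Phi, w) \<notin> \<beta> ` J"
    using exists_nbr_Phi_notin inv x c unfolding indep_image_def by blast
  have "finite V"
    using ls by (simp add: looped_simple_def)
  then have "finite (\<beta> ` J)"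
    using st finite_subset_W unfolding subtransversal_def by blast
  moreover have "snd x \<in> nbrs V B w"
    using w(1) ls by (auto simp: nbrs_def looped_simple_def)
  moreover have "ns_map B w x = x"
    using w(1) by (intro ns_map_other) (auto simp: nbrs_def)
  ultimately show ?thesis
    using w c x col_ns_op_nbr[of "snd x" V B w "fst x"]
    by (intro that[of w]) (auto simp: nbrs_def card_non_Phi_ns_map_le intro: rev_image_eqI[of x])
qed

lemma indep_image_to_Phis:
  assumes "indep_image V A J B \<beta>"
  shows "\<exists>C \<gamma>. induced_iso V A C \<gamma> \<and> \<gamma> ` J \<subseteq> Phis V"
  using assms
proof (induction "card_non_Phi (\<beta> ` J)" arbitrary: B \<beta> rule: less_induct)
  case less
  have SW: "\<beta> ` J \<subseteq> W V" and fin: "finite V"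
    using less.prems by (simp_all add: indep_image_def subtransversal_def looped_simple_def)
  show ?case
  proof (cases "\<beta> ` J \<subseteq> Phis V")
    case True
    then show ?thesis
      using less.prems unfolding indep_image_def by blast
  next
    case False
    then obtain x where x: "x \<in> \<beta> ` J" "x \<notin> Phis V"
      by blast
    then have "fst x \<noteq> Phi"
      using SW by (cases x) (auto simp: Phis_def W_def)
    note x = x(1) this
    have v: "snd x \<in> V"
      using x SW by (auto simp: W_def)
    obtain B1 \<beta>1 where inv1: "indep_image V A J B1 \<beta>1" and x1: "x \<in> \<beta>1 ` J"
      and le1: "card_non_Phi (\<beta>1 ` J) \<le> card_non_Phi (\<beta> ` J)" and c1: "col B1 x (snd x)"
    proof (cases "col B x (snd x)")
      case True
      show ?thesis
        by (rule that[OF less.prems x(1) order.refl True])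
    next
      case False
      then obtain w where w: "w \<in> V" "card_non_Phi (ns_map B w ` \<beta> ` J) \<le> card_non_Phi (\<beta> ` J)"
        "x \<in> ns_map B w ` \<beta> ` J" "col (ns_op V w B) x (snd x)"
        using indep_image_make_pivot[OF less.prems x] by blast
      show ?thesis
        by (rule that[OF indep_image_ns[OF less.prems w(1)]]) (use w in \<open>simp_all add: image_comp\<close>)
    qed
    have st1: "subtransversal V (\<beta>1 ` J)"
      using inv1 by (simp add: indep_image_def)
    have "card_non_Phi ((ns_map B1 (snd x) \<circ> \<beta>1) ` J) < card_non_Phi (\<beta> ` J)"
      using card_non_Phi_pivot[OF st1 fin x1 x(2) c1] le1 by (simp add: image_comp)
    then show ?thesis
      by (rule less.hyps[OF _ indep_image_ns[OF inv1 v]])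
  qed
qed

theorem proposition4p1:
  fixes V :: "'a set" and A :: "'a \<Rightarrow> 'a \<Rightarrow> bool" and J :: "(kind \<times> 'a) set"
  assumes "looped_simple V A"
    and "subtransversal V J"
    and "indep_IAS V A J"
  shows "\<exists>B \<beta>. induced_iso V A B \<beta> \<and> \<beta> ` J \<subseteq> Phis V"
proof -
  have "indep_image V A J A id"
    using assms induced_iso.refl[of V A] by (simp add: indep_image_def)
  then show ?thesis
    by (rule indep_image_to_Phis)
qed

end
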